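(* Let $\alpha_n,\alpha\in\mathfrak g$ with $\alpha_n\to\alpha$, and suppose the sequence of flat connections $\alpha_n\,d\theta$ is non-degenerating (see context). Then the Poincaré constants $C_{\alpha_n}$ are uniformly bounded for all sufficiently large $n$.
   Context: $G$ is a compact Lie group with Lie algebra $\mathfrak g$, acting through an orthogonal representation on $\mathbb R^K$, so every $\xi\in\mathfrak g$ is identified with a skew-symmetric $K\times K$ matrix. For $\alpha\in\mathfrak g$, $\partial_{\theta,\alpha}u:=\partial_\theta u+\alpha u$ for $u\in W^{2,2}(S^1,\mathbb R^K)$. The Poincaré constant $C_\alpha$ is the smallest constant with $\int_{S^1}|\partial_{\theta,\alpha}u|^2\le C_\alpha\int_{S^1}|\partial^2_{\theta,\alpha}u|^2$ for all $u\in W^{2,2}(S^1,\mathbb R^K)$ (it is finite). A sequence $\alpha_n\,d\theta$ with $\alpha_n\to\alpha$ is called non-degenerating if there exists $N$ such that every $u\in W^{2,2}(S^1,\mathbb R^K)$ with $\partial_{\theta,\alpha}u=0$ also satisfies $\partial_{\theta,\alpha_n}u=0$ for all $n\ge N$; otherwise it is called degenerating. *)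

theory Defs
  imports "HOL-Analysis.Analysis"
begin

text \<open>S^1 is parametrised by \<theta> in [0, 2 pi]; maps S^1 -> R^K are 2 pi-periodic maps
  real => real^'k.  Lie algebra elements are K x K skew-symmetric real matrices.\<close>

definition skew :: "real^'k^'k \<Rightarrow> bool" where
  "skew A \<longleftrightarrow> transpose A = - A"

text \<open>W^{2,2}(S^1,R^K), via the continuously differentiable representative:
  u is 2 pi-periodic and differentiable with derivative u1, u1 is absolutely continuous
  with weak derivative u2 (locally Lebesgue integrable), and u2 is in L^2 on one period.\<close>

definition W22 :: "(real \<Rightarrow> real^'k) \<Rightarrow> (real \<Rightarrow> real^'k) \<Rightarrow> (real \<Rightarrow> real^'k) \<Rightarrow> bool" where
  "W22 u u1 u2 \<longleftrightarrow>
     (\<forall>t. u (t + 2*pi) = u t) \<and>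
     (\<forall>t. (u has_vector_derivative u1 t) (at t)) \<and>
     (\<forall>a b. a \<le> b \<longrightarrow> u2 absolutely_integrable_on {a..b} \<and>
                         u1 b - u1 a = integral {a..b} u2) \<and>
     (\<lambda>t. (norm (u2 t))\<^sup>2) integrable_on {0..2*pi}"

definition cov_d1 :: "real^'k^'k \<Rightarrow> (real \<Rightarrow> real^'k) \<Rightarrow> (real \<Rightarrow> real^'k) \<Rightarrow> real \<Rightarrow> real^'k" where
  "cov_d1 \<alpha> u u1 = (\<lambda>t. u1 t + \<alpha> *v u t)"

definition cov_d2 :: "real^'k^'k \<Rightarrow> (real \<Rightarrow> real^'k) \<Rightarrow> (real \<Rightarrow> real^'k) \<Rightarrow> (real \<Rightarrow> real^'k) \<Rightarrow> real \<Rightarrow> real^'k" where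
  "cov_d2 \<alpha> u u1 u2 = (\<lambda>t. (u2 t + \<alpha> *v u1 t) + \<alpha> *v (u1 t + \<alpha> *v u t))"

definition poincare_const :: "real^'k^'k \<Rightarrow> real" where
  "poincare_const \<alpha> = Inf {C. \<forall>u u1 u2. W22 u u1 u2 \<longrightarrow>
      integral {0..2*pi} (\<lambda>t. (norm (cov_d1 \<alpha> u u1 t))\<^sup>2)
        \<le> C * integral {0..2*pi} (\<lambda>t. (norm (cov_d2 \<alpha> u u1 u2 t))\<^sup>2)}"

definition non_degenerating :: "(nat \<Rightarrow> real^'k^'k) \<Rightarrow> real^'k^'k \<Rightarrow> bool" where
  "non_degenerating as \<alpha> \<longleftrightarrow>
     (\<exists>N. \<forall>u u1 u2. W22 u u1 u2 \<and> (\<forall>t. cov_d1 \<alpha> u u1 t = 0) \<longrightarrow>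
            (\<forall>n\<ge>N. \<forall>t. cov_d1 (as n) u u1 t = 0))"

end

theory Submission
  imports Defs
begin

text \<open>In the gauge \<open>y = e^{\<theta> \<alpha>\<^sub>n} \<partial>\<^sub>\<theta>\<^sub>,\<^sub>\<alpha>\<^sub>n u\<close> the covariant derivative becomes \<open>d/d\<theta>\<close>, so
  \<open>|y t - y s| \<le> \<integral>\<^sub>s\<^sup>t |\<partial>\<^sup>2\<^sub>\<theta>\<^sub>,\<^sub>\<alpha>\<^sub>n u|\<close>, and \<open>y\<close> closes up to the holonomy: \<open>y(2\<pi>) = H\<^sub>n y(0)\<close>
  with \<open>H\<^sub>n = e^{2\<pi> \<alpha>\<^sub>n}\<close>. Let \<open>F\<close> be the fixed space of the limit holonomy \<open>H = e^{2\<pi> \<alpha>}\<close>.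
  Non-degeneration says that the parallel sections for \<open>\<alpha>\<close> stay parallel for \<open>\<alpha>\<^sub>n\<close>, hence
  \<open>H\<^sub>n\<close> fixes \<open>F\<close> for large \<open>n\<close>; on \<open>F\<^sup>\<bottom>\<close> the map \<open>H - 1\<close> has a gap \<open>\<delta> > 0\<close>, which survives
  as \<open>\<delta>/2\<close> for \<open>H\<^sub>n\<close> once \<open>\<alpha>\<^sub>n\<close> is close to \<open>\<alpha>\<close>. The \<open>F\<close>-component of \<open>y\<close> has mean zero, since
  \<open>\<integral> y = H\<^sub>n u(0) - u(0) \<bottom> F\<close>, and the \<open>F\<^sup>\<bottom>\<close>-component is controlled by the gap; by
  Cauchy-Schwarz this gives \<open>C\<^sub>\<alpha>\<^sub>n \<le> (2\<pi> (1 + 2/\<delta>))\<^sup>2\<close>.\<close>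

section \<open>Bounded linear endomorphisms as a Banach algebra\<close>

text \<open>The matrix exponential is taken in this algebra: \<open>exp\<close> needs a \<open>real_normed_algebra_1\<close>,
  which neither \<open>real^'n^'n\<close> nor \<open>blinfun\<close> is.\<close>

typedef (overloaded) 'a endo = "{f :: 'a::euclidean_space \<Rightarrow> 'a. bounded_linear f}"
  morphisms endo_apply Endo
  by (blast intro: bounded_linear_ident)

setup_lifting type_definition_endo

lemma endo_eqI: "(\<And>x. endo_apply X x = endo_apply Y x) \<Longrightarrow> X = Y"
  by transfer auto

lemma bounded_linear_endo_apply [simp, intro]: "bounded_linear (endo_apply X)"
  using endo_apply by auto

instantiation endo :: (euclidean_space) real_normed_vector
begin

lift_definition norm_endo :: "'a endo \<Rightarrow> real" is onorm .
lift_definition minus_endo :: "'a endo \<Rightarrow> 'a endo \<Rightarrow> 'a endo"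
  is "\<lambda>f g x. f x - g x" by (rule bounded_linear_sub)
definition dist_endo :: "'a endo \<Rightarrow> 'a endo \<Rightarrow> real" where "dist_endo a b = norm (a - b)"
definition uniformity_endo_def [code del]:
  "(uniformity :: ('a endo \<times> 'a endo) filter) = (INF e\<in>{0 <..}. principal {(x, y). dist x y < e})"
definition open_endo :: "'a endo set \<Rightarrow> bool"
  where [code del]: "open_endo S = (\<forall>x\<in>S. \<forall>\<^sub>F (x', y) in uniformity. x' = x \<longrightarrow> y \<in> S)"
lift_definition uminus_endo :: "'a endo \<Rightarrow> 'a endo" is "\<lambda>f x. - f x"
  by (rule bounded_linear_minus)
lift_definition zero_endo :: "'a endo" is "\<lambda>x. 0" by (rule bounded_linear_zero)
lift_definition plus_endo :: "'a endo \<Rightarrow> 'a endo \<Rightarrow> 'a endo" is "\<lambda>f g x. f x + g x"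
  by (rule bounded_linear_add)
lift_definition scaleR_endo :: "real \<Rightarrow> 'a endo \<Rightarrow> 'a endo" is "\<lambda>r f x. r *\<^sub>R f x"
  by (rule bounded_linear_compose[OF bounded_linear_scaleR_right])
definition sgn_endo :: "'a endo \<Rightarrow> 'a endo" where "sgn_endo x = scaleR (inverse (norm x)) x"

instance
  by standard (unfold dist_endo_def open_endo_def sgn_endo_def uniformity_endo_def,
      (rule refl | (transfer, force simp: onorm_triangle onorm_scaleR onorm_eq_0 algebra_simps))+)

end

instantiation endo :: (euclidean_space) real_normed_algebra_1
begin

lift_definition times_endo :: "'a endo \<Rightarrow> 'a endo \<Rightarrow> 'a endo" is "\<lambda>f g x. f (g x)"
  by (rule bounded_linear_compose)
lift_definition one_endo :: "'a endo" is "\<lambda>x. x" by (rule bounded_linear_ident)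

instance
proof
  fix a b c :: "'a endo" and r :: real
  show "a * b * c = a * (b * c)" by transfer auto
  show "(a + b) * c = a * c + b * c" by transfer auto
  show "a * (b + c) = a * b + a * c"
    by transfer (auto simp: linear_add bounded_linear.linear)
  show "r *\<^sub>R a * b = r *\<^sub>R (a * b)" by transfer auto
  show "a * r *\<^sub>R b = r *\<^sub>R (a * b)"
    by transfer (auto simp: linear_scale bounded_linear.linear)
  show "1 * a = a" "a * 1 = a" by (transfer, rule refl)+
  show "norm (a * b) \<le> norm a * norm b"
    by transfer (use onorm_compose in \<open>simp add: comp_def\<close>)
  show "norm (1::'a endo) = 1" by transfer (rule onorm_id)
  obtain e :: 'a where "e \<in> Basis" using nonempty_Basis by blast
  then have "endo_apply (0::'a endo) e \<noteq> endo_apply 1 e"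
    by (simp add: zero_endo.rep_eq one_endo.rep_eq nonzero_Basis)
  then show "(0::'a endo) \<noteq> 1" by metis
qed

end

lemma endo_apply_add [simp]: "endo_apply (X + Y) x = endo_apply X x + endo_apply Y x"
  by transfer auto
lemma endo_apply_diff [simp]: "endo_apply (X - Y) x = endo_apply X x - endo_apply Y x"
  by transfer auto
lemma endo_apply_minus [simp]: "endo_apply (- X) x = - endo_apply X x"
  by transfer auto
lemma endo_apply_scaleR [simp]: "endo_apply (r *\<^sub>R X) x = r *\<^sub>R endo_apply X x"
  by transfer auto
lemma endo_apply_zero [simp]: "endo_apply 0 x = 0"
  by transfer auto
lemma endo_apply_one [simp]: "endo_apply 1 x = x"
  by transfer auto
lemma endo_apply_mult [simp]: "endo_apply (X * Y) x = endo_apply X (endo_apply Y x)"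
  by transfer auto

lemma endo_apply_add_right [simp]: "endo_apply X (x + y) = endo_apply X x + endo_apply X y"
  by (simp add: linear_add bounded_linear.linear)
lemma endo_apply_diff_right [simp]: "endo_apply X (x - y) = endo_apply X x - endo_apply X y"
  by (simp add: linear_diff bounded_linear.linear)
lemma endo_apply_scaleR_right [simp]: "endo_apply X (r *\<^sub>R y) = r *\<^sub>R endo_apply X y"
  by (simp add: linear_scale bounded_linear.linear)
lemma endo_apply_minus_right [simp]: "endo_apply X (- y) = - endo_apply X y"
  by (simp add: linear_neg bounded_linear.linear)
lemma endo_apply_zero_right [simp]: "endo_apply X 0 = 0"
  by (simp add: linear_0 bounded_linear.linear)

lemma norm_endo_apply_le: "norm (endo_apply X x) \<le> norm X * norm x"
  by transfer (rule onorm)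

lemma norm_endo_le: "0 \<le> b \<Longrightarrow> (\<And>x. norm (endo_apply X x) \<le> b * norm x) \<Longrightarrow> norm X \<le> b"
  by transfer (rule onorm_bound)

lemma bounded_bilinear_endo_apply: "bounded_bilinear endo_apply"
proof
  fix a a' :: "'a::euclidean_space endo" and b b' :: 'a and r :: real
  show "endo_apply (a + a') b = endo_apply a b + endo_apply a' b"
    and "endo_apply a (b + b') = endo_apply a b + endo_apply a b'"
    and "endo_apply (r *\<^sub>R a) b = r *\<^sub>R endo_apply a b"
    and "endo_apply a (r *\<^sub>R b) = r *\<^sub>R endo_apply a b" by simp_all
  show "\<exists>K. \<forall>a b. norm (endo_apply a b) \<le> norm a * norm b * K"
    using norm_endo_apply_le by (metis mult.right_neutral)
qed

lemmas bounded_linear_endo_apply_left =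
  bounded_bilinear.bounded_linear_left[OF bounded_bilinear_endo_apply]

lemma norm_blinfun_endo: "norm (Blinfun (endo_apply X)) = norm X"
  by (simp add: norm_blinfun_def norm_endo_def bounded_linear_Blinfun_apply)

instance endo :: (euclidean_space) banach
proof
  fix X :: "nat \<Rightarrow> 'a endo"
  let ?B = "\<lambda>X. Blinfun (endo_apply X)"
  have B_diff: "?B X - ?B Y = ?B (X - Y)" for X Y
    by (rule blinfun_eqI) (simp add: bounded_linear_Blinfun_apply blinfun.diff_left)
  assume "Cauchy X"
  then have "Cauchy (\<lambda>n. ?B (X n))"
    unfolding Cauchy_def dist_norm by (simp add: B_diff norm_blinfun_endo)
  then obtain L where L: "(\<lambda>n. ?B (X n)) \<longlonglongrightarrow> L"
    using convergent_eq_Cauchy by blast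
  define Y where "Y = Endo (blinfun_apply L)"
  have "?B Y = L"
    unfolding Y_def by (simp add: Endo_inverse blinfun.bounded_linear_right blinfun_apply_inverse)
  then have "(\<lambda>n. norm (?B (X n) - ?B Y)) \<longlonglongrightarrow> 0"
    using L by (simp add: tendsto_norm_zero_iff LIM_zero_iff)
  then have "X \<longlonglongrightarrow> Y"
    by (simp add: B_diff norm_blinfun_endo tendsto_norm_zero_iff LIM_zero_iff)
  then show "convergent X" unfolding convergent_def by blast
qed

section \<open>Matrix flows\<close>

definition endo_of_matrix :: "real^'n::finite^'n \<Rightarrow> (real^'n) endo" where
  "endo_of_matrix A = Endo (\<lambda>x. A *v x)"

lemma endo_apply_endo_of_matrix [simp]: "endo_apply (endo_of_matrix A) x = A *v x"
  unfolding endo_of_matrix_def by (subst Endo_inverse) auto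

lemma bounded_linear_endo_of_matrix: "bounded_linear endo_of_matrix"
proof -
  have "linear endo_of_matrix"
    by (rule linearI; rule endo_eqI)
      (simp_all add: matrix_vector_mult_add_rdistrib scaleR_matrix_vector_assoc)
  then show ?thesis by (rule linear_conv_bounded_linear[THEN iffD1])
qed

lemma endo_of_matrix_tendsto:
  "A \<longlonglongrightarrow> B \<Longrightarrow> (\<lambda>n. endo_of_matrix (A n)) \<longlonglongrightarrow> endo_of_matrix B"
  by (rule bounded_linear.tendsto[OF bounded_linear_endo_of_matrix])

definition matrix_flow :: "real^'n::finite^'n \<Rightarrow> real \<Rightarrow> (real^'n) endo" where
  "matrix_flow A t = exp (t *\<^sub>R endo_of_matrix A)"

lemma matrix_flow_add: "matrix_flow A (s + t) = matrix_flow A s * matrix_flow A t"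
  unfolding matrix_flow_def scaleR_add_left
  by (rule exp_add_commuting) (simp add: algebra_simps)

lemma matrix_flow_zero [simp]: "matrix_flow A 0 = 1"
  unfolding matrix_flow_def by simp

lemma matrix_flow_minus_mult: "matrix_flow A (- t) * matrix_flow A t = 1"
  and matrix_flow_mult_minus: "matrix_flow A t * matrix_flow A (- t) = 1"
  by (metis matrix_flow_add matrix_flow_zero add.commute add.right_inverse)+

lemma matrix_flow_apply_matrix: "endo_apply (matrix_flow A t) (A *v x) = A *v endo_apply (matrix_flow A t) x"
  using exp_times_scaleR_commute[of t "endo_of_matrix A"]
  by (metis endo_apply_endo_of_matrix endo_apply_mult matrix_flow_def)

lemma has_vector_derivative_matrix_flow:
  "(matrix_flow A has_vector_derivative matrix_flow A t * endo_of_matrix A) (at t within S)"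
  unfolding matrix_flow_def[abs_def] by (rule exp_scaleR_has_vector_derivative_right)

lemma has_vector_derivative_matrix_flow_minus:
  "((\<lambda>t. matrix_flow A (- t)) has_vector_derivative - (matrix_flow A (- t) * endo_of_matrix A)) (at t within S)"
  using vector_diff_chain_within[OF has_vector_derivative_minus[OF has_vector_derivative_id]
      has_vector_derivative_matrix_flow[of A "- t"]]
  by (simp add: o_def)

lemma has_vector_derivative_matrix_flow_apply:
  "((\<lambda>t. endo_apply (matrix_flow A t) x) has_vector_derivative A *v endo_apply (matrix_flow A t) x)
     (at t within S)"
  using bounded_linear.has_vector_derivative[OF bounded_linear_endo_apply_left
      has_vector_derivative_matrix_flow[of A t S], of x]
  by (simp add: matrix_flow_apply_matrix)

lemma has_vector_derivative_matrix_flow_minus_apply: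
  "((\<lambda>t. endo_apply (matrix_flow A (- t)) x) has_vector_derivative - (A *v endo_apply (matrix_flow A (- t)) x))
     (at t within S)"
  using bounded_linear.has_vector_derivative[OF bounded_linear_endo_apply_left
      has_vector_derivative_matrix_flow_minus[of A t S], of x]
  by (simp add: matrix_flow_apply_matrix)

lemma continuous_on_matrix_flow: "continuous_on S (matrix_flow A)"
  by (rule continuous_on_vector_derivative) (rule has_vector_derivative_matrix_flow)

lemma matrix_flow_apply_eqI:
  assumes "\<And>s. B *v endo_apply (matrix_flow A s) x = A *v endo_apply (matrix_flow A s) x"
  shows "endo_apply (matrix_flow B t) x = endo_apply (matrix_flow A t) x"
proof -
  define G where "G t = endo_apply (matrix_flow B (- t)) (endo_apply (matrix_flow A t) x)" for t
  have "(G has_vector_derivative 0) (at t)" for t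
    using bounded_bilinear.has_vector_derivative[OF bounded_bilinear_endo_apply
        has_vector_derivative_matrix_flow_minus[of B t UNIV]
        has_vector_derivative_matrix_flow_apply[of A x t UNIV]]
    by (simp add: assms G_def[abs_def])
  then have "G t = G 0"
    by (intro has_derivative_zero_unique[of UNIV]) (auto simp: has_vector_derivative_def)
  then have "endo_apply (matrix_flow B t) (G t) = endo_apply (matrix_flow B t) x"
    by (simp add: G_def)
  then show ?thesis
    by (simp add: G_def flip: endo_apply_mult mult.assoc add: matrix_flow_mult_minus)
qed

lemma skew_inner_self: "skew A \<Longrightarrow> x \<bullet> (A *v x) = 0"
proof -
  assume "skew A"
  have "x \<bullet> (A *v x) = (transpose A *v x) \<bullet> x"
    by (simp add: dot_lmul_matrix)
  also have "transpose A *v x = - (A *v x)"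
    using \<open>skew A\<close> unfolding skew_def by (simp add: vec_eq_iff matrix_vector_mult_def sum_negf)
  finally have "x \<bullet> (A *v x) = - (x \<bullet> (A *v x))"
    by (simp add: inner_commute)
  then show ?thesis by simp
qed

lemma norm_matrix_flow_apply:
  assumes "skew A"
  shows "norm (endo_apply (matrix_flow A t) x) = norm x"
proof -
  define f where "f t = endo_apply (matrix_flow A t) x \<bullet> endo_apply (matrix_flow A t) x" for t
  have "(f has_real_derivative 0) (at s)" for s
    using bounded_bilinear.has_vector_derivative[OF bounded_bilinear_inner
        has_vector_derivative_matrix_flow_apply[of A x s UNIV]
        has_vector_derivative_matrix_flow_apply[of A x s UNIV]]
      skew_inner_self[OF assms, of "endo_apply (matrix_flow A s) x"]
    by (simp add: f_def[abs_def] inner_commute has_real_derivative_iff_has_vector_derivative)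
  then have "f t = f 0" by (intro DERIV_isconst_all allI)
  then show ?thesis by (simp add: f_def norm_eq_sqrt_inner)
qed

lemma inner_matrix_flow_apply:
  assumes "skew A"
  shows "endo_apply (matrix_flow A t) x \<bullet> endo_apply (matrix_flow A t) y = x \<bullet> y"
  using norm_matrix_flow_apply[OF assms, of t "x + y"] norm_matrix_flow_apply[OF assms, of t x]
    norm_matrix_flow_apply[OF assms, of t y]
  by (simp add: norm_eq_sqrt_inner inner_add_left inner_add_right inner_commute)

lemma norm_matrix_flow_le: "skew A \<Longrightarrow> norm (matrix_flow A t) \<le> 1"
  by (rule norm_endo_le) (simp_all add: norm_matrix_flow_apply)

text \<open>Duhamel: \<open>d/ds (e^{-sB} e^{sA}) = e^{-sB} (A - B) e^{sA}\<close>, and both factors are isometries.\<close>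

lemma norm_matrix_flow_diff_le:
  assumes "skew A" "skew B" "0 \<le> T"
  shows "norm (matrix_flow A T - matrix_flow B T) \<le> T * norm (endo_of_matrix A - endo_of_matrix B)"
proof -
  let ?D = "endo_of_matrix A - endo_of_matrix B"
  define G where "G s = matrix_flow B (- s) * matrix_flow A s" for s
  have "(G has_vector_derivative matrix_flow B (- s) * ?D * matrix_flow A s) (at s within {0..T})" for s
    using has_vector_derivative_mult[OF has_vector_derivative_matrix_flow_minus[of B s "{0..T}"]
        has_vector_derivative_matrix_flow[of A s "{0..T}"]]
    by (simp add: G_def[abs_def] algebra_simps exp_times_scaleR_commute matrix_flow_def mult.assoc)
  then have "((\<lambda>s. matrix_flow B (- s) * ?D * matrix_flow A s) has_integral G T - G 0) {0..T}"
    using assms(3) by (intro fundamental_theorem_of_calculus) auto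
  moreover have "norm (matrix_flow B (- s) * ?D * matrix_flow A s) \<le> norm ?D" for s
  proof -
    have "norm (matrix_flow B (- s) * ?D * matrix_flow A s)
        \<le> norm (matrix_flow B (- s)) * norm ?D * norm (matrix_flow A s)"
      by (meson mult_right_mono norm_ge_zero norm_mult_ineq order_trans)
    also have "\<dots> \<le> 1 * norm ?D * 1"
      by (intro mult_mono norm_matrix_flow_le assms) simp_all
    finally show ?thesis by simp
  qed
  ultimately have G: "norm (G T - 1) \<le> norm ?D * T"
    using has_integral_bound[of "norm ?D" _ "G T - G 0" 0 T] assms(3) by (simp add: G_def)
  have "matrix_flow A T - matrix_flow B T = matrix_flow B T * (G T - 1)"
    by (simp add: G_def algebra_simps matrix_flow_mult_minus flip: mult.assoc)
  also have "norm \<dots> \<le> norm (matrix_flow B T) * norm (G T - 1)"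
    by (rule norm_mult_ineq)
  also have "\<dots> \<le> 1 * (norm ?D * T)"
    by (intro mult_mono norm_matrix_flow_le assms G) simp_all
  finally show ?thesis by (simp add: mult.commute)
qed

lemma matrix_flow_gap_perturb:
  assumes "skew A" "skew B" "0 \<le> T"
    and gap: "\<delta> * norm z \<le> norm (endo_apply (matrix_flow A T) z - z)"
    and close: "T * norm (endo_of_matrix B - endo_of_matrix A) \<le> \<delta> / 2"
  shows "\<delta> / 2 * norm z \<le> norm (endo_apply (matrix_flow B T) z - z)"
proof -
  have "norm (matrix_flow A T - matrix_flow B T) \<le> \<delta> / 2"
    using norm_matrix_flow_diff_le[OF \<open>skew A\<close> \<open>skew B\<close> \<open>0 \<le> T\<close>] close
    by (simp add: norm_minus_commute)
  then have "norm (endo_apply (matrix_flow A T - matrix_flow B T) z) \<le> \<delta> / 2 * norm z"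
    by (meson norm_endo_apply_le mult_right_mono norm_ge_zero order_trans)
  moreover have "norm (endo_apply (matrix_flow A T) z - z)
      \<le> norm (endo_apply (matrix_flow B T) z - z) + norm (endo_apply (matrix_flow A T - matrix_flow B T) z)"
    using norm_triangle_ineq[of "endo_apply (matrix_flow B T) z - z"
        "endo_apply (matrix_flow A T - matrix_flow B T) z"] by simp
  ultimately show ?thesis using gap by linarith
qed

lemma eventually_matrix_flow_gap:
  fixes as :: "nat \<Rightarrow> real^'n::finite^'n"
  assumes "\<And>n. skew (as n)" "skew \<alpha>" "as \<longlonglongrightarrow> \<alpha>" "0 < \<delta>" "0 \<le> T"
  shows "\<forall>\<^sub>F n in sequentially. \<forall>z. \<delta> * norm z \<le> norm (endo_apply (matrix_flow \<alpha> T) z - z) \<longrightarrow>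
           \<delta> / 2 * norm z \<le> norm (endo_apply (matrix_flow (as n) T) z - z)"
proof -
  have "(\<lambda>n. norm (endo_of_matrix (as n) - endo_of_matrix \<alpha>) * T) \<longlonglongrightarrow> 0"
    using endo_of_matrix_tendsto[OF assms(3)]
    by (intro tendsto_mult_left_zero) (simp add: tendsto_norm_zero_iff LIM_zero_iff)
  from order_tendstoD(2)[OF this half_gt_zero[OF \<open>0 < \<delta>\<close>]]
  have "\<forall>\<^sub>F n in sequentially. norm (endo_of_matrix (as n) - endo_of_matrix \<alpha>) * T < \<delta> / 2" .
  then show ?thesis
  proof eventually_elim
    case (elim n)
    then have "T * norm (endo_of_matrix (as n) - endo_of_matrix \<alpha>) \<le> \<delta> / 2"
      by (simp add: mult.commute)
    then show ?case
      using matrix_flow_gap_perturb[OF assms(2,1) \<open>0 \<le> T\<close>] by blast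
  qed
qed

section \<open>Integration by parts for indefinite integrals\<close>

lemma norm_diff_le_of_small_steps:
  fixes \<Phi> :: "real \<Rightarrow> 'a::real_normed_vector" and \<mu> :: "real \<Rightarrow> real"
  assumes "a \<le> b" and "d > 0"
    and step: "\<And>s t. a \<le> s \<Longrightarrow> s \<le> t \<Longrightarrow> t \<le> b \<Longrightarrow> t - s < d \<Longrightarrow>
                 norm (\<Phi> t - \<Phi> s) \<le> \<mu> t - \<mu> s"
  shows "norm (\<Phi> b - \<Phi> a) \<le> \<mu> b - \<mu> a"
proof -
  obtain n :: nat where n: "(b - a) / d < n" using reals_Archimedean2 by blast
  moreover have "0 \<le> (b - a) / d" using assms by simp
  ultimately have n_pos: "real n > 0" by linarith
  define p where "p i = a + real i * (b - a) / real n" for i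
  have p0: "p 0 = a" and pn: "p n = b" using n_pos by (auto simp: p_def)
  have "norm (\<Phi> (p (Suc i)) - \<Phi> (p i)) \<le> \<mu> (p (Suc i)) - \<mu> (p i)" if "i < n" for i
  proof (rule step)
    have "real (Suc i) * (b - a) \<le> real n * (b - a)"
      using that \<open>a \<le> b\<close> by (intro mult_right_mono) auto
    then show "p (Suc i) \<le> b" using n_pos by (simp add: p_def field_simps)
    have "p (Suc i) - p i = (b - a) / real n" using n_pos by (simp add: p_def field_simps)
    also have "\<dots> < d" using n n_pos \<open>d > 0\<close> by (simp add: field_simps)
    finally show "p (Suc i) - p i < d" .
  qed (use \<open>a \<le> b\<close> n_pos in \<open>simp_all add: p_def field_simps mult_right_mono\<close>)
  then have "(\<Sum>i<n. norm (\<Phi> (p (Suc i)) - \<Phi> (p i))) \<le> (\<Sum>i<n. \<mu> (p (Suc i)) - \<mu> (p i))"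
    by (intro sum_mono) simp
  moreover have "norm (\<Phi> b - \<Phi> a) \<le> (\<Sum>i<n. norm (\<Phi> (p (Suc i)) - \<Phi> (p i)))"
    using norm_sum[of "\<lambda>i. \<Phi> (p (Suc i)) - \<Phi> (p i)" "{..<n}"]
    using sum_lessThan_telescope[of "\<lambda>i. \<Phi> (p i)" n] by (simp add: p0 pn)
  ultimately show ?thesis
    using sum_lessThan_telescope[of "\<lambda>i. \<mu> (p i)" n] by (simp add: p0 pn)
qed

lemma absolutely_integrable_endo_apply:
  fixes R :: "real \<Rightarrow> (real^'n::finite) endo" and g :: "real \<Rightarrow> real^'n"
  assumes R: "continuous_on {a..b} R" and g: "g absolutely_integrable_on {a..b}"
  shows "(\<lambda>s. endo_apply (R s) (g s)) absolutely_integrable_on {a..b}"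
proof -
  define M where "M s = matrix (endo_apply (R s))" for s
  have M_apply: "endo_apply (R s) x = M s *v x" for s x
    by (simp add: M_def bounded_linear.linear)
  have bilinear_mult: "bilinear (\<lambda>(A::real^'n^'n) x. A *v x)"
    by (auto simp: bilinear_def intro!: linearI simp: matrix_vector_mult_add_rdistrib
        scaleR_matrix_vector_assoc matrix_vector_right_distrib matrix_vector_mult_scaleR)
  have M: "continuous_on {a..b} M"
    unfolding M_def matrix_def
    by (intro continuous_on_vec_lambda bounded_linear.continuous_on[OF bounded_linear_vec_nth]
        bounded_linear.continuous_on[OF bounded_linear_endo_apply_left] R)
  have "(\<lambda>s. M s *v g s) absolutely_integrable_on {a..b}"
    by (rule absolutely_integrable_bounded_measurable_product[OF bilinear_mult
          continuous_imp_measurable_on_sets_lebesgue[OF M] _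
          compact_imp_bounded[OF compact_continuous_image[OF M compact_Icc]] g]) simp_all
  then show ?thesis by (simp add: M_apply)
qed

lemma continuous_on_indefinite_integral_eq:
  fixes g v :: "real \<Rightarrow> 'a::banach"
  assumes "g integrable_on {a..b}" and "\<And>s. s \<in> {a..b} \<Longrightarrow> v s - v a = integral {a..s} g"
  shows "continuous_on {a..b} v"
proof -
  have "continuous_on {a..b} (\<lambda>s. v a + integral {a..s} g)"
    by (intro continuous_on_add continuous_on_const indefinite_integral_continuous_1 assms(1))
  then show ?thesis
    by (rule continuous_on_eq) (metis assms(2) add.commute diff_add_cancel)
qed

lemma integral_Icc_diff:
  fixes f :: "real \<Rightarrow> 'a::banach"
  assumes "f integrable_on {a..b}" "a \<le> s" "s \<le> t" "t \<le> b"
  shows "integral {a..t} f - integral {a..s} f = integral {s..t} f"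
  using Henstock_Kurzweil_Integration.integral_combine[of a s t f]
    integrable_subinterval_real[OF assms(1), of a t] assms
  by (simp add: algebra_simps)

lemma has_integral_endo_apply_product_error:
  fixes R R' :: "real \<Rightarrow> (real^'n::finite) endo" and v g :: "real \<Rightarrow> real^'n"
  assumes "a \<le> b"
    and R: "\<And>s. s \<in> {a..b} \<Longrightarrow> (R has_vector_derivative R' s) (at s within {a..b})"
    and R': "continuous_on {a..b} R'"
    and g: "g absolutely_integrable_on {a..b}"
    and v: "\<And>s. s \<in> {a..b} \<Longrightarrow> v s - v a = integral {a..s} g"
  shows "((\<lambda>r. endo_apply (R r - R a) (g r) + endo_apply (R' r) (v r - v b)) has_integral
           integral {a..b} (\<lambda>r. endo_apply (R r) (g r) + endo_apply (R' r) (v r))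
           - (endo_apply (R b) (v b) - endo_apply (R a) (v a))) {a..b}"
proof -
  define q where "q = (\<lambda>r. endo_apply (R r - R a) (g r) + endo_apply (R' r) (v r - v b))"
  have gi: "g integrable_on {a..b}"
    using g by (simp add: absolutely_integrable_on_def)
  have "(\<lambda>r. endo_apply (R r - R a) (g r)) absolutely_integrable_on {a..b}"
    using R by (intro absolutely_integrable_endo_apply continuous_on_diff continuous_on_const g
        continuous_on_vector_derivative)
  moreover have "continuous_on {a..b} (\<lambda>r. endo_apply (R' r) (v r - v b))"
    by (intro bounded_bilinear.continuous_on[OF bounded_bilinear_endo_apply] R'
        continuous_on_diff continuous_on_const continuous_on_indefinite_integral_eq[OF gi v])
  ultimately have qi: "q integrable_on {a..b}"
    unfolding q_def absolutely_integrable_on_def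
    by (intro integrable_add[OF _ integrable_continuous_interval]) (elim conjE)
  have h1: "((\<lambda>r. endo_apply (R a) (g r)) has_integral endo_apply (R a) (v b - v a)) {a..b}"
    using has_integral_linear[OF integrable_integral[OF gi] bounded_linear_endo_apply]
      v[of b] \<open>a \<le> b\<close> by (simp add: o_def)
  have "(R' has_integral (R b - R a)) {a..b}"
    using \<open>a \<le> b\<close> R by (rule fundamental_theorem_of_calculus)
  from has_integral_linear[OF this bounded_linear_endo_apply_left[of "v b"]]
  have h2: "((\<lambda>r. endo_apply (R' r) (v b)) has_integral endo_apply (R b - R a) (v b)) {a..b}"
    by (simp add: o_def)
  have "endo_apply (R r) (g r) + endo_apply (R' r) (v r)
      = q r + endo_apply (R a) (g r) + endo_apply (R' r) (v b)" for r
    by (simp add: q_def algebra_simps)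
  then have "((\<lambda>r. endo_apply (R r) (g r) + endo_apply (R' r) (v r)) has_integral
      integral {a..b} q + endo_apply (R b) (v b) - endo_apply (R a) (v a)) {a..b}"
    using has_integral_add[OF has_integral_add[OF integrable_integral[OF qi] h1] h2]
    by (simp add: algebra_simps)
  then have "integral {a..b} q = integral {a..b} (\<lambda>r. endo_apply (R r) (g r) + endo_apply (R' r) (v r))
      - (endo_apply (R b) (v b) - endo_apply (R a) (v a))"
    by (simp add: integral_unique)
  with qi show ?thesis
    unfolding q_def by (simp add: has_integral_iff)
qed

lemma endo_apply_product_increment_le:
  fixes R R' :: "real \<Rightarrow> (real^'n::finite) endo" and v g :: "real \<Rightarrow> real^'n"
  assumes "a \<le> b"
    and R: "\<And>s. s \<in> {a..b} \<Longrightarrow> (R has_vector_derivative R' s) (at s within {a..b})"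
    and R': "continuous_on {a..b} R'"
    and g: "g absolutely_integrable_on {a..b}"
    and v: "\<And>s. s \<in> {a..b} \<Longrightarrow> v s - v a = integral {a..s} g"
    and osc: "\<And>r. r \<in> {a..b} \<Longrightarrow> norm (R r - R a) \<le> e \<and> norm (v r - v b) \<le> e \<and> norm (R' r) \<le> K"
  shows "norm (integral {a..b} (\<lambda>r. endo_apply (R r) (g r) + endo_apply (R' r) (v r))
             - (endo_apply (R b) (v b) - endo_apply (R a) (v a)))
         \<le> e * (integral {a..b} (\<lambda>r. norm (g r)) + K * (b - a))"
proof -
  note error = has_integral_endo_apply_product_error[OF assms(1-5)]
  have ngi: "(\<lambda>r. norm (g r)) integrable_on {a..b}"
    using g by (simp add: absolutely_integrable_on_def)
  have "0 \<le> e" "0 \<le> K"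
    using osc[of a] \<open>a \<le> b\<close> norm_ge_zero order_trans by (metis atLeastAtMost_iff order_refl)+
  have "norm (integral {a..b} (\<lambda>r. endo_apply (R r) (g r) + endo_apply (R' r) (v r))
             - (endo_apply (R b) (v b) - endo_apply (R a) (v a)))
      = norm (integral {a..b} (\<lambda>r. endo_apply (R r - R a) (g r) + endo_apply (R' r) (v r - v b)))"
    by (rule arg_cong[where f = norm, OF integral_unique[OF error, symmetric]])
  also have "\<dots> \<le> integral {a..b} (\<lambda>r. e * norm (g r) + K * e)"
  proof (rule integral_norm_bound_integral[OF has_integral_integrable[OF error]])
    show "(\<lambda>r. e * norm (g r) + K * e) integrable_on {a..b}"
      using integrable_cmul[OF ngi, of e] by (intro integrable_add integrable_const_ivl) simp
    fix r assume r: "r \<in> {a..b}"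
    have "norm (endo_apply (R r - R a) (g r) + endo_apply (R' r) (v r - v b))
        \<le> norm (R r - R a) * norm (g r) + norm (R' r) * norm (v r - v b)"
      by (intro norm_triangle_le add_mono norm_endo_apply_le)
    also have "\<dots> \<le> e * norm (g r) + K * e"
      using osc[OF r] \<open>0 \<le> e\<close> \<open>0 \<le> K\<close> by (intro add_mono mult_mono) auto
    finally show "norm (endo_apply (R r - R a) (g r) + endo_apply (R' r) (v r - v b))
        \<le> e * norm (g r) + K * e" .
  qed
  also have "\<dots> = e * (integral {a..b} (\<lambda>r. norm (g r)) + K * (b - a))"
    using \<open>a \<le> b\<close> integrable_cmul[OF ngi, of e]
    by (simp add: integral_add integrable_const_ivl algebra_simps)
  finally show ?thesis .
qed

lemma endo_apply_product_increment_small: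
  fixes R R' :: "real \<Rightarrow> (real^'n::finite) endo" and v g :: "real \<Rightarrow> real^'n"
  assumes "a \<le> b"
    and R: "\<And>s. s \<in> {a..b} \<Longrightarrow> (R has_vector_derivative R' s) (at s within {a..b})"
    and R': "continuous_on {a..b} R'" and K: "\<And>r. r \<in> {a..b} \<Longrightarrow> norm (R' r) \<le> K"
    and g: "g absolutely_integrable_on {a..b}"
    and v: "\<And>s. s \<in> {a..b} \<Longrightarrow> v s - v a = integral {a..s} g"
    and "e > 0"
  obtains d where "d > 0"
    "\<And>s t. a \<le> s \<Longrightarrow> s \<le> t \<Longrightarrow> t \<le> b \<Longrightarrow> t - s < d \<Longrightarrow>
      norm (integral {s..t} (\<lambda>r. endo_apply (R r) (g r) + endo_apply (R' r) (v r))
            - (endo_apply (R t) (v t) - endo_apply (R s) (v s)))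
      \<le> e * (integral {s..t} (\<lambda>r. norm (g r)) + K * (t - s))"
proof -
  have gi: "g integrable_on {a..b}"
    using g by (simp add: absolutely_integrable_on_def)
  have cR: "continuous_on {a..b} R"
    using R by (rule continuous_on_vector_derivative)
  have cv: "continuous_on {a..b} v"
    by (rule continuous_on_indefinite_integral_eq[OF gi v])
  obtain d1 d2 where "d1 > 0" "d2 > 0"
    and d1: "\<And>s r. s \<in> {a..b} \<Longrightarrow> r \<in> {a..b} \<Longrightarrow> dist r s < d1 \<Longrightarrow> dist (R r) (R s) < e"
    and d2: "\<And>s r. s \<in> {a..b} \<Longrightarrow> r \<in> {a..b} \<Longrightarrow> dist r s < d2 \<Longrightarrow> dist (v r) (v s) < e"
    using compact_uniformly_continuous[OF cR compact_Icc]
      compact_uniformly_continuous[OF cv compact_Icc] \<open>e > 0\<close>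
    unfolding uniformly_continuous_on_def by metis
  show ?thesis
  proof (rule that[of "min d1 d2"])
    fix s t assume st: "a \<le> s" "s \<le> t" "t \<le> b" "t - s < min d1 d2"
    then have sub: "{s..t} \<subseteq> {a..b}" by auto
    show "norm (integral {s..t} (\<lambda>r. endo_apply (R r) (g r) + endo_apply (R' r) (v r))
          - (endo_apply (R t) (v t) - endo_apply (R s) (v s)))
        \<le> e * (integral {s..t} (\<lambda>r. norm (g r)) + K * (t - s))"
    proof (rule endo_apply_product_increment_le)
      show "(R has_vector_derivative R' r) (at r within {s..t})" if "r \<in> {s..t}" for r
        using R[of r] that sub by (auto intro: has_vector_derivative_within_subset)
      show "continuous_on {s..t} R'" using R' sub by (rule continuous_on_subset)
      show "g absolutely_integrable_on {s..t}" using g sub by (rule absolutely_integrable_on_subinterval)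
      show "v r - v s = integral {s..r} g" if "r \<in> {s..t}" for r
        using v[of r] v[of s] integral_Icc_diff[OF gi, of s r] that st
        by (auto simp: algebra_simps)
      fix r assume "r \<in> {s..t}"
      then show "norm (R r - R s) \<le> e \<and> norm (v r - v t) \<le> e \<and> norm (R' r) \<le> K"
        using d1[of s r] d2[of r t] K[of r] st sub
        by (auto simp: dist_norm norm_minus_commute intro: less_imp_le)
    qed (use st in auto)
  qed (use \<open>d1 > 0\<close> \<open>d2 > 0\<close> in simp)
qed

text \<open>Summed over a fine partition, the local error estimates become arbitrarily small.\<close>

lemma has_integral_endo_apply_product:
  fixes R R' :: "real \<Rightarrow> (real^'n::finite) endo" and v g :: "real \<Rightarrow> real^'n"
  assumes "a \<le> b"
    and R: "\<And>s. s \<in> {a..b} \<Longrightarrow> (R has_vector_derivative R' s) (at s within {a..b})"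
    and R': "continuous_on {a..b} R'"
    and g: "g absolutely_integrable_on {a..b}"
    and v: "\<And>s. s \<in> {a..b} \<Longrightarrow> v s - v a = integral {a..s} g"
  shows "((\<lambda>r. endo_apply (R r) (g r) + endo_apply (R' r) (v r)) has_integral
           endo_apply (R b) (v b) - endo_apply (R a) (v a)) {a..b}"
proof -
  define f where "f r = endo_apply (R r) (g r) + endo_apply (R' r) (v r)" for r
  define H where "H r = endo_apply (R r) (v r)" for r
  define \<Phi> where "\<Phi> t = integral {a..t} f - (H t - H a)" for t
  have gi: "g integrable_on {a..b}" and ngi: "(\<lambda>r. norm (g r)) integrable_on {a..b}"
    using g by (auto simp: absolutely_integrable_on_def)
  have cR: "continuous_on {a..b} R"
    using R by (rule continuous_on_vector_derivative)
  have "continuous_on {a..b} (\<lambda>r. endo_apply (R' r) (v r))"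
    by (intro bounded_bilinear.continuous_on[OF bounded_bilinear_endo_apply] R'
        continuous_on_indefinite_integral_eq[OF gi v])
  then have fi: "f integrable_on {a..b}"
    using absolutely_integrable_endo_apply[OF cR g] unfolding f_def absolutely_integrable_on_def
    by (intro integrable_add[OF _ integrable_continuous_interval]) (elim conjE)
  obtain K where K: "\<And>r. r \<in> {a..b} \<Longrightarrow> norm (R' r) \<le> K"
    using compact_imp_bounded[OF compact_continuous_image[OF R' compact_Icc]]
    unfolding bounded_iff by blast
  define C where "C = integral {a..b} (\<lambda>r. norm (g r)) + K * (b - a)"
  have small: "norm (\<Phi> b - \<Phi> a) \<le> e * C" if "e > 0" for e
  proof -
    obtain d where "d > 0" and d: "\<And>s t. a \<le> s \<Longrightarrow> s \<le> t \<Longrightarrow> t \<le> b \<Longrightarrow> t - s < d \<Longrightarrow>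
        norm (integral {s..t} f - (H t - H s)) \<le> e * (integral {s..t} (\<lambda>r. norm (g r)) + K * (t - s))"
      by (rule endo_apply_product_increment_small[OF \<open>a \<le> b\<close> R R' K g v \<open>e > 0\<close>,
            folded f_def[abs_def] H_def]) (assumption | rule that)+
    define \<mu> where "\<mu> t = e * (integral {a..t} (\<lambda>r. norm (g r)) + K * t)" for t
    have "norm (\<Phi> b - \<Phi> a) \<le> \<mu> b - \<mu> a"
    proof (rule norm_diff_le_of_small_steps[OF \<open>a \<le> b\<close> \<open>d > 0\<close>])
      fix s t assume st: "a \<le> s" "s \<le> t" "t \<le> b" "t - s < d"
      have "\<Phi> t - \<Phi> s = integral {s..t} f - (H t - H s)"
        using integral_Icc_diff[OF fi, of s t] st by (simp add: \<Phi>_def)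
      moreover have "\<mu> t - \<mu> s = e * (integral {s..t} (\<lambda>r. norm (g r)) + K * (t - s))"
        using integral_Icc_diff[OF ngi, of s t] st by (simp add: \<mu>_def algebra_simps)
      ultimately show "norm (\<Phi> t - \<Phi> s) \<le> \<mu> t - \<mu> s" using d[OF st] by simp
    qed
    also have "\<mu> b - \<mu> a = e * C" by (simp add: \<mu>_def C_def algebra_simps)
    finally show ?thesis .
  qed
  have "norm (\<Phi> b - \<Phi> a) \<le> 0"
  proof (rule field_le_epsilon)
    fix e :: real assume "e > 0"
    then have "norm (\<Phi> b - \<Phi> a) \<le> e / (\<bar>C\<bar> + 1) * C"
      by (intro small) simp
    also have "\<dots> \<le> e / (\<bar>C\<bar> + 1) * (\<bar>C\<bar> + 1)"
      using \<open>e > 0\<close> by (intro mult_left_mono) auto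
    finally show "norm (\<Phi> b - \<Phi> a) \<le> 0 + e" by simp
  qed
  then have "integral {a..b} f = H b - H a" by (simp add: \<Phi>_def)
  then show ?thesis using fi unfolding f_def H_def by (simp add: has_integral_iff)
qed

lemma square_integral_le:
  fixes f :: "real \<Rightarrow> real"
  assumes f: "f integrable_on {a..b}" and f2: "(\<lambda>t. (f t)\<^sup>2) integrable_on {a..b}"
  shows "(integral {a..b} f)\<^sup>2 \<le> (b - a) * integral {a..b} (\<lambda>t. (f t)\<^sup>2)"
proof (cases "a < b")
  case True
  define I where "I = integral {a..b} f"
  define X where "X = integral {a..b} (\<lambda>t. (f t)\<^sup>2)"
  define c where "c = I / (b - a)"
  have "((\<lambda>t. (f t)\<^sup>2 - 2 * c * f t + c\<^sup>2) has_integral X - 2 * c * I + c\<^sup>2 * (b - a)) {a..b}"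
    using has_integral_add[OF has_integral_diff[OF integrable_integral[OF f2]
          has_integral_mult_right[OF integrable_integral[OF f], of "2 * c"]]
          has_integral_const_real[of "c\<^sup>2" a b]] True
    by (simp add: X_def I_def mult.commute)
  moreover have "(f t)\<^sup>2 - 2 * c * f t + c\<^sup>2 = (f t - c)\<^sup>2" for t
    by (simp add: power2_diff)
  ultimately have "((\<lambda>t. (f t - c)\<^sup>2) has_integral X - 2 * c * I + c\<^sup>2 * (b - a)) {a..b}"
    by simp
  then have "0 \<le> X - 2 * c * I + c\<^sup>2 * (b - a)"
    by (rule has_integral_nonneg) simp
  also have "\<dots> = X - c * I"
    using True by (simp add: c_def power2_eq_square)
  finally have "0 \<le> (b - a) * (X - c * I)"
    using True by simp
  also have "\<dots> = (b - a) * X - I\<^sup>2"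
  proof -
    have "(b - a) * c = I" using True by (simp add: c_def)
    then show ?thesis by (metis mult.assoc power2_eq_square right_diff_distrib)
  qed
  finally show ?thesis by (simp add: I_def X_def)
next
  case False
  then have "integral {a..b} g = 0" for g :: "real \<Rightarrow> real"
    using integral_null[of a b g] content_real_eq_0[of a b] by (simp add: cbox_interval)
  then show ?thesis by simp
qed

section \<open>Curves closing up to an isometry\<close>

lemma linear_fixed_space_gap:
  fixes f :: "'a::euclidean_space \<Rightarrow> 'a"
  assumes "linear f"
  obtains \<delta> where "\<delta> > 0"
    "\<And>z. (\<And>x. f x = x \<Longrightarrow> z \<bullet> x = 0) \<Longrightarrow> \<delta> * norm z \<le> norm (f z - z)"
proof -
  define S where "S = sphere 0 1 \<inter> (\<Inter>x\<in>{x. f x = x}. {z. x \<bullet> z = 0})"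
  have S_iff: "z \<in> S \<longleftrightarrow> norm z = 1 \<and> (\<forall>x. f x = x \<longrightarrow> z \<bullet> x = 0)" for z
    by (auto simp: S_def inner_commute)
  have normalize_in_S: "z /\<^sub>R norm z \<in> S" if "z \<noteq> 0" "\<And>x. f x = x \<Longrightarrow> z \<bullet> x = 0" for z
    using that by (simp add: S_iff)
  have "compact S"
    unfolding S_def by (intro compact_Int_closed compact_sphere closed_INT ballI closed_hyperplane)
  have f_diff_scale: "norm (f (c *\<^sub>R z) - c *\<^sub>R z) = \<bar>c\<bar> * norm (f z - z)" for c z
    by (metis assms linear_scale norm_scaleR scaleR_right_diff_distrib)
  show ?thesis
  proof (cases "S = {}")
    case True
    show ?thesis
    proof (rule that[of 1])
      fix z assume "\<And>x. f x = x \<Longrightarrow> z \<bullet> x = 0"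
      then have "z = 0" using normalize_in_S True by blast
      then show "1 * norm z \<le> norm (f z - z)" by simp
    qed simp
  next
    case False
    have "continuous_on S (\<lambda>z. norm (f z - z))"
      by (intro continuous_intros linear_continuous_on[OF assms[THEN linear_conv_bounded_linear[THEN iffD1]]])
    then obtain z0 where z0: "z0 \<in> S" and min: "\<And>z. z \<in> S \<Longrightarrow> norm (f z0 - z0) \<le> norm (f z - z)"
      using continuous_attains_inf[OF \<open>compact S\<close> False] by blast
    have "norm (f z0 - z0) > 0"
    proof (rule ccontr)
      assume "\<not> norm (f z0 - z0) > 0"
      then have "z0 \<bullet> z0 = 0" using z0 by (simp add: S_iff)
      then show False using z0 by (simp add: S_iff)
    qed
    then show ?thesis
    proof (rule that)
      fix z assume z: "\<And>x. f x = x \<Longrightarrow> z \<bullet> x = 0"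
      show "norm (f z0 - z0) * norm z \<le> norm (f z - z)"
      proof (cases "z = 0")
        case False
        then have "norm (f z0 - z0) \<le> norm (f z - z) / norm z"
          using min[OF normalize_in_S[OF False z]] f_diff_scale[of "inverse (norm z)" z]
          by (simp add: divide_inverse_commute)
        then show ?thesis using False by (simp add: field_simps)
      qed simp
    qed
  qed
qed

lemma abs_inner_le_of_mean_orthogonal:
  fixes y :: "real \<Rightarrow> 'a::euclidean_space"
  assumes "0 < T" and "(y has_integral Y) {0..T}" and "Y \<bullet> x = 0"
    and osc: "\<And>s. s \<in> {0..T} \<Longrightarrow> norm (y t - y s) \<le> V"
  shows "\<bar>y t \<bullet> x\<bar> \<le> V * norm x"
proof -
  have "((\<lambda>s. y t - y s) has_integral T *\<^sub>R y t - Y) {0..T}"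
    using has_integral_diff[OF has_integral_const_real[of "y t" 0 T] assms(2)] \<open>0 < T\<close> by simp
  from has_integral_linear[OF this bounded_linear_inner_left[of x]]
  have "((\<lambda>s. (y t - y s) \<bullet> x) has_integral T * (y t \<bullet> x)) (cbox 0 T)"
    using \<open>Y \<bullet> x = 0\<close> by (simp add: o_def inner_diff_left cbox_interval)
  moreover have "norm ((y t - y s) \<bullet> x) \<le> V * norm x" if "s \<in> cbox 0 T" for s
  proof -
    have "norm ((y t - y s) \<bullet> x) \<le> norm (y t - y s) * norm x"
      using Cauchy_Schwarz_ineq2 by simp
    also have "\<dots> \<le> V * norm x"
      using osc[of s] that by (intro mult_right_mono) (auto simp: cbox_interval)
    finally show ?thesis .
  qed
  moreover have "0 \<le> V * norm x"
    using order_trans[OF norm_ge_zero osc[of 0]] \<open>0 < T\<close> by simp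
  ultimately have "norm (T * (y t \<bullet> x)) \<le> V * norm x * T"
    using has_integral_bound[of "V * norm x" "\<lambda>s. (y t - y s) \<bullet> x" "T * (y t \<bullet> x)" 0 T] \<open>0 < T\<close>
    by simp
  then show ?thesis using \<open>0 < T\<close> by (simp add: abs_mult mult.commute)
qed

text \<open>The component of \<open>y t\<close> in \<open>F\<close> is controlled by the vanishing mean, the orthogonal one by the
  gap \<open>\<delta>\<close>.\<close>

lemma norm_le_of_twisted_closed_curve:
  fixes y :: "real \<Rightarrow> 'a::euclidean_space" and f :: "'a \<Rightarrow> 'a"
  assumes "0 < T" and "t \<in> {0..T}"
    and f: "linear f" "\<And>x. norm (f x) = norm x"
    and F: "subspace F" "\<And>x. x \<in> F \<Longrightarrow> f x = x"
    and gap: "\<And>z. (\<And>x. x \<in> F \<Longrightarrow> z \<bullet> x = 0) \<Longrightarrow> \<delta> * norm z \<le> norm (f z - z)" and "0 < \<delta>"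
    and closed: "y T = f (y 0)"
    and incr: "\<And>s t. 0 \<le> s \<Longrightarrow> s \<le> t \<Longrightarrow> t \<le> T \<Longrightarrow> norm (y t - y s) \<le> \<mu> t - \<mu> s"
    and mean: "(y has_integral Y) {0..T}" "\<And>x. x \<in> F \<Longrightarrow> Y \<bullet> x = 0"
  shows "norm (y t) \<le> (1 + 1 / \<delta>) * (\<mu> T - \<mu> 0)"
proof -
  define V where "V = \<mu> T - \<mu> 0"
  have mono: "\<mu> s \<le> \<mu> t" if "0 \<le> s" "s \<le> t" "t \<le> T" for s t
    using incr[OF that] norm_ge_zero[of "y t - y s"] by linarith
  have osc: "norm (y t - y s) \<le> V" if "s \<in> {0..T}" "t \<in> {0..T}" for s t
  proof (cases "s \<le> t")
    case True
    then show ?thesis using incr[of s t] mono[of 0 s] mono[of t T] that by (auto simp: V_def)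
  next
    case False
    then show ?thesis using incr[of t s] mono[of 0 t] mono[of s T] that
      by (auto simp: V_def norm_minus_commute)
  qed
  obtain p q where p: "p \<in> span F" and q: "\<And>x. x \<in> span F \<Longrightarrow> orthogonal q x" and pq: "y t = p + q"
    using orthogonal_subspace_decomp_exists[of F "y t"] by metis
  have "span F = F" using F(1) by (rule span_eq_iff[THEN iffD2])
  then have "p \<in> F" and q_orth: "\<And>x. x \<in> F \<Longrightarrow> q \<bullet> x = 0"
    using p q unfolding orthogonal_def by metis+
  have "y t \<bullet> p = (norm p)\<^sup>2"
    using q_orth[OF \<open>p \<in> F\<close>] by (simp add: pq inner_add_left inner_add_right inner_commute power2_norm_eq_inner)
  then have "norm p * norm p = \<bar>y t \<bullet> p\<bar>"
    by (simp add: power2_eq_square)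
  also have "\<dots> \<le> V * norm p"
    by (rule abs_inner_le_of_mean_orthogonal[OF \<open>0 < T\<close> mean(1) mean(2)[OF \<open>p \<in> F\<close>]])
      (use osc \<open>t \<in> {0..T}\<close> in blast)
  finally have p_le: "norm p \<le> V"
    using osc[of 0 0] \<open>0 < T\<close> by (cases "p = 0") (auto simp: mult_le_cancel_right)
  have "f (y t) - y t = f (y t - y 0) + (y T - y t)"
    using closed f(1) by (simp add: linear_diff)
  then have "norm (f (y t) - y t) \<le> norm (y t - y 0) + norm (y T - y t)"
    using norm_triangle_ineq[of "f (y t - y 0)" "y T - y t"] by (simp only: f(2))
  also have "\<dots> \<le> V"
    using incr[of 0 t] incr[of t T] \<open>t \<in> {0..T}\<close> by (simp add: V_def)
  also have "f (y t) - y t = f q - q"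
    using F(2)[OF \<open>p \<in> F\<close>] f(1) by (simp add: pq linear_add)
  finally have q_le: "norm q \<le> V / \<delta>"
    using gap[OF q_orth] \<open>0 < \<delta>\<close> by (simp add: field_simps)
  have "norm (y t) \<le> norm p + norm q" by (simp add: pq norm_triangle_ineq)
  also have "\<dots> \<le> V + V / \<delta>" using p_le q_le by simp
  finally show ?thesis by (simp add: V_def distrib_right)
qed

section \<open>Sobolev functions on the circle\<close>

lemma W22_of_twice_differentiable:
  assumes "\<And>t. u (t + 2 * pi) = u t"
    and "\<And>t. (u has_vector_derivative u1 t) (at t)"
    and u1: "\<And>t. (u1 has_vector_derivative u2 t) (at t)"
    and u2: "continuous_on UNIV u2"
  shows "W22 u u1 u2"
  unfolding W22_def
proof (intro conjI allI impI assms)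
  fix a b :: real assume "a \<le> b"
  show "u2 absolutely_integrable_on {a..b}"
    using u2 by (intro absolutely_integrable_continuous_real) (rule continuous_on_subset, auto)
  have "(u2 has_integral (u1 b - u1 a)) {a..b}"
    using \<open>a \<le> b\<close> u1 by (intro fundamental_theorem_of_calculus) (auto intro: has_vector_derivative_at_within)
  then show "u1 b - u1 a = integral {a..b} u2" by (simp add: integral_unique)
next
  show "(\<lambda>t. (norm (u2 t))\<^sup>2) integrable_on {0..2 * pi}"
    using u2 by (intro integrable_continuous_interval continuous_intros) (rule continuous_on_subset, auto)
qed

lemma W22_continuous_on_derivative:
  assumes "W22 u u1 u2"
  shows "continuous_on {a..b} u1"
proof (cases "a \<le> b")
  case True
  with assms have "u2 integrable_on {a..b}" "\<And>s. s \<in> {a..b} \<Longrightarrow> u1 s - u1 a = integral {a..s} u2"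
    by (auto simp: W22_def absolutely_integrable_on_def)
  then show ?thesis by (rule continuous_on_indefinite_integral_eq)
qed simp

lemma W22_derivative_periodic:
  assumes "W22 u u1 u2"
  shows "u1 (t + 2 * pi) = u1 t"
proof -
  have du: "\<And>s. (u has_vector_derivative u1 s) (at s)" and per: "(\<lambda>s. u (s + 2 * pi)) = u"
    using assms by (auto simp: W22_def)
  have "((\<lambda>s. s + 2 * pi) has_vector_derivative 1) (at t)"
    by (auto intro!: derivative_eq_intros)
  from vector_diff_chain_at[OF this du]
  have "(u has_vector_derivative u1 (t + 2 * pi)) (at t)"
    by (simp add: o_def per)
  with du show ?thesis by (metis vector_derivative_unique_at)
qed

lemma continuous_on_W22:
  "W22 u u1 u2 \<Longrightarrow> continuous_on S u"
  by (rule continuous_on_vector_derivative) (auto simp: W22_def intro: has_vector_derivative_at_within)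

lemma continuous_on_cov_d1:
  assumes "W22 u u1 u2"
  shows "continuous_on {a..b} (cov_d1 A u u1)"
  unfolding cov_d1_def
  by (intro continuous_on_add W22_continuous_on_derivative[OF assms]
      bounded_linear.continuous_on[OF matrix_vector_mul_bounded_linear continuous_on_W22[OF assms]])

lemma absolutely_integrable_cov_d1_derivative:
  assumes "W22 u u1 u2" "a \<le> b"
  shows "(\<lambda>t. u2 t + A *v u1 t) absolutely_integrable_on {a..b}"
proof (rule set_integral_add(1))
  show "u2 absolutely_integrable_on {a..b}" using assms by (simp add: W22_def)
  show "(\<lambda>t. A *v u1 t) absolutely_integrable_on {a..b}"
    by (intro absolutely_integrable_continuous_real W22_continuous_on_derivative[OF assms(1)]
        bounded_linear.continuous_on[OF matrix_vector_mul_bounded_linear])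
qed

lemma cov_d1_indefinite_integral:
  assumes "W22 u u1 u2" "a \<le> s"
  shows "cov_d1 A u u1 s - cov_d1 A u u1 a = integral {a..s} (\<lambda>r. u2 r + A *v u1 r)"
proof -
  have "(u has_vector_derivative u1 r) (at r within {a..s})" for r
    using assms(1) by (auto simp: W22_def intro: has_vector_derivative_at_within)
  then have "((\<lambda>r. A *v u1 r) has_integral (A *v u s - A *v u a)) {a..s}"
    using assms(2)
    by (intro fundamental_theorem_of_calculus bounded_linear.has_vector_derivative[OF
          matrix_vector_mul_bounded_linear])
  moreover have "(u2 has_integral (u1 s - u1 a)) {a..s}"
    using assms by (auto simp: W22_def absolutely_integrable_on_def)
  ultimately have "integral {a..s} (\<lambda>r. u2 r + A *v u1 r) = (u1 s - u1 a) + (A *v u s - A *v u a)"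
    by (intro integral_unique has_integral_add)
  then show ?thesis by (simp add: cov_d1_def algebra_simps)
qed

lemma cov_d2_eq: "cov_d2 A u u1 u2 t = (u2 t + A *v u1 t) + A *v cov_d1 A u u1 t"
  by (simp add: cov_d2_def cov_d1_def)

lemma absolutely_integrable_cov_d2:
  assumes "W22 u u1 u2" "a \<le> b"
  shows "cov_d2 A u u1 u2 absolutely_integrable_on {a..b}"
  unfolding cov_d2_eq[abs_def]
  by (intro set_integral_add(1) absolutely_integrable_cov_d1_derivative[OF assms]
      absolutely_integrable_continuous_real
      bounded_linear.continuous_on[OF matrix_vector_mul_bounded_linear continuous_on_cov_d1[OF assms(1)]])

lemma square_integrable_cov_d2:
  assumes "W22 u u1 u2"
  shows "(\<lambda>t. (norm (cov_d2 A u u1 u2 t))\<^sup>2) integrable_on {0..2 * pi}"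
proof -
  define c where "c t = A *v u1 t + A *v cov_d1 A u u1 t" for t
  have c: "continuous_on {0..2 * pi} c"
    unfolding c_def
    by (intro continuous_on_add bounded_linear.continuous_on[OF matrix_vector_mul_bounded_linear]
        W22_continuous_on_derivative[OF assms] continuous_on_cov_d1[OF assms])
  have "(\<lambda>t. (norm (cov_d2 A u u1 u2 t))\<^sup>2) absolutely_integrable_on {0..2 * pi}"
  proof (rule measurable_bounded_by_integrable_imp_absolutely_integrable)
    have "cov_d2 A u u1 u2 \<in> borel_measurable (lebesgue_on {0..2 * pi})"
      using absolutely_integrable_cov_d2[OF assms, of 0 "2 * pi"]
      by (simp add: absolutely_integrable_measurable)
    then show "(\<lambda>t. (norm (cov_d2 A u u1 u2 t))\<^sup>2) \<in> borel_measurable (lebesgue_on {0..2 * pi})"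
      by measurable
    show "(\<lambda>t. 2 * (norm (u2 t))\<^sup>2 + 2 * (norm (c t))\<^sup>2) integrable_on {0..2 * pi}"
    proof -
      have "(\<lambda>t. (norm (u2 t))\<^sup>2) integrable_on {0..2 * pi}" using assms by (simp add: W22_def)
      moreover have "(\<lambda>t. (norm (c t))\<^sup>2) integrable_on {0..2 * pi}"
        by (intro integrable_continuous_interval continuous_intros c)
      ultimately show ?thesis
        using integrable_on_cmult_left[where c=2] by (intro integrable_add) simp_all
    qed
    fix t
    have "(norm (cov_d2 A u u1 u2 t))\<^sup>2 \<le> (norm (u2 t) + norm (c t))\<^sup>2"
      using norm_triangle_ineq[of "u2 t" "c t"]
      by (intro power_mono) (simp_all add: cov_d2_eq c_def algebra_simps)
    also have "\<dots> \<le> 2 * (norm (u2 t))\<^sup>2 + 2 * (norm (c t))\<^sup>2"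
      using sum_squares_bound[of "norm (u2 t)" "norm (c t)"] by (simp add: power2_sum)
    finally show "norm ((norm (cov_d2 A u u1 u2 t))\<^sup>2) \<le> 2 * (norm (u2 t))\<^sup>2 + 2 * (norm (c t))\<^sup>2"
      by simp
  qed simp
  then show ?thesis by (simp add: absolutely_integrable_on_def)
qed

lemma has_integral_matrix_flow_cov_d1:
  assumes "W22 u u1 u2" "a \<le> b"
  shows "((\<lambda>s. endo_apply (matrix_flow A s) (cov_d1 A u u1 s)) has_integral
           endo_apply (matrix_flow A b) (u b) - endo_apply (matrix_flow A a) (u a)) {a..b}"
proof (rule fundamental_theorem_of_calculus[OF assms(2)])
  fix s
  have "(u has_vector_derivative u1 s) (at s within {a..b})"
    using assms(1) by (auto simp: W22_def intro: has_vector_derivative_at_within)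
  from bounded_bilinear.has_vector_derivative[OF bounded_bilinear_endo_apply
      has_vector_derivative_matrix_flow this]
  show "((\<lambda>s. endo_apply (matrix_flow A s) (u s)) has_vector_derivative
      endo_apply (matrix_flow A s) (cov_d1 A u u1 s)) (at s within {a..b})"
    by (simp add: cov_d1_def)
qed

lemma has_integral_matrix_flow_cov_d2:
  assumes "W22 u u1 u2" "a \<le> b"
  shows "((\<lambda>s. endo_apply (matrix_flow A s) (cov_d2 A u u1 u2 s)) has_integral
           endo_apply (matrix_flow A b) (cov_d1 A u u1 b)
           - endo_apply (matrix_flow A a) (cov_d1 A u u1 a)) {a..b}"
proof -
  have "((\<lambda>s. endo_apply (matrix_flow A s) (u2 s + A *v u1 s)
          + endo_apply (matrix_flow A s * endo_of_matrix A) (cov_d1 A u u1 s)) has_integral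
        endo_apply (matrix_flow A b) (cov_d1 A u u1 b)
        - endo_apply (matrix_flow A a) (cov_d1 A u u1 a)) {a..b}"
    by (rule has_integral_endo_apply_product[OF assms(2) has_vector_derivative_matrix_flow
          continuous_on_mult_right[OF continuous_on_matrix_flow]
          absolutely_integrable_cov_d1_derivative[OF assms] cov_d1_indefinite_integral[OF assms(1)]])
      simp
  then show ?thesis by (simp add: cov_d2_eq)
qed

section \<open>The Poincar\'e estimate\<close>

lemma norm_cov_d1_le_of_holonomy_gap:
  fixes A :: "real^'n::finite^'n"
  defines "M \<equiv> matrix_flow A (2 * pi)"
  assumes "skew A"
    and F: "subspace F" "\<And>x. x \<in> F \<Longrightarrow> endo_apply M x = x"
    and gap: "\<And>z. (\<And>x. x \<in> F \<Longrightarrow> z \<bullet> x = 0) \<Longrightarrow> \<delta> * norm z \<le> norm (endo_apply M z - z)"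
    and "0 < \<delta>"
    and W: "W22 u u1 u2"
    and t: "t \<in> {0..2 * pi}"
  shows "norm (cov_d1 A u u1 t) \<le> (1 + 1 / \<delta>) * integral {0..2 * pi} (\<lambda>s. norm (cov_d2 A u u1 u2 s))"
proof -
  define T where "T = 2 * pi"
  define v where "v = cov_d1 A u u1"
  define d where "d = cov_d2 A u u1 u2"
  define y where "y t = endo_apply (matrix_flow A t) (v t)" for t
  define \<mu> where "\<mu> t = integral {0..t} (\<lambda>s. norm (d s))" for t
  have "0 < T" by (simp add: T_def)
  have nd: "(\<lambda>s. norm (d s)) integrable_on {a..b}" if "a \<le> b" for a b
    using absolutely_integrable_cov_d2[OF W that] by (simp add: d_def absolutely_integrable_on_def)
  have incr: "norm (y t - y s) \<le> \<mu> t - \<mu> s" if "0 \<le> s" "s \<le> t" "t \<le> T" for s t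
  proof -
    have y: "((\<lambda>r. endo_apply (matrix_flow A r) (d r)) has_integral y t - y s) {s..t}"
      unfolding y_def v_def d_def by (rule has_integral_matrix_flow_cov_d2[OF W \<open>s \<le> t\<close>])
    have "norm (y t - y s) \<le> integral {s..t} (\<lambda>r. norm (d r))"
      using integral_unique[OF y] integral_norm_bound_integral[OF has_integral_integrable[OF y] nd[OF \<open>s \<le> t\<close>]]
      by (simp add: norm_matrix_flow_apply[OF \<open>skew A\<close>])
    also have "\<dots> = \<mu> t - \<mu> s"
      using integral_Icc_diff[OF nd[of 0 T]] that \<open>0 < T\<close> by (simp add: \<mu>_def)
    finally show ?thesis .
  qed
  have u_per: "u T = u 0"
    using W unfolding W22_def T_def by (metis add_0)
  have "v T = v 0"
    using u_per W22_derivative_periodic[OF W, of 0] by (simp add: v_def T_def cov_d1_def)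
  then have closed: "y T = endo_apply M (y 0)"
    by (simp add: y_def M_def T_def)
  have mean: "(y has_integral endo_apply M (u 0) - u 0) {0..T}"
    using has_integral_matrix_flow_cov_d1[OF W, of 0 T A] u_per \<open>0 < T\<close>
    by (simp add: y_def[abs_def] v_def M_def T_def)
  have mean_orth: "(endo_apply M (u 0) - u 0) \<bullet> x = 0" if "x \<in> F" for x
    using inner_matrix_flow_apply[OF \<open>skew A\<close>, of "2 * pi" "u 0" x] F(2)[OF that]
    by (simp add: M_def inner_diff_left)
  have "norm (v t) = norm (y t)" by (simp add: y_def norm_matrix_flow_apply[OF \<open>skew A\<close>])
  also have "\<dots> \<le> (1 + 1 / \<delta>) * (\<mu> T - \<mu> 0)"
    by (rule norm_le_of_twisted_closed_curve[OF \<open>0 < T\<close> t[folded T_def] _ _ F gap \<open>0 < \<delta>\<close> closed incr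
          mean mean_orth])
      (simp_all add: bounded_linear.linear norm_matrix_flow_apply[OF \<open>skew A\<close>] M_def)
  finally show ?thesis by (simp add: \<mu>_def v_def d_def T_def)
qed

lemma cov_d1_L2_le_of_holonomy_gap:
  fixes A :: "real^'n::finite^'n"
  defines "M \<equiv> matrix_flow A (2 * pi)"
  assumes "skew A"
    and F: "subspace F" "\<And>x. x \<in> F \<Longrightarrow> endo_apply M x = x"
    and gap: "\<And>z. (\<And>x. x \<in> F \<Longrightarrow> z \<bullet> x = 0) \<Longrightarrow> \<delta> * norm z \<le> norm (endo_apply M z - z)"
    and "0 < \<delta>"
    and W: "W22 u u1 u2"
  shows "integral {0..2 * pi} (\<lambda>t. (norm (cov_d1 A u u1 t))\<^sup>2)
           \<le> (2 * pi * (1 + 1 / \<delta>))\<^sup>2 * integral {0..2 * pi} (\<lambda>t. (norm (cov_d2 A u u1 u2 t))\<^sup>2)"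
proof -
  define T where "T = 2 * pi"
  define V where "V = integral {0..T} (\<lambda>s. norm (cov_d2 A u u1 u2 s))"
  define X where "X = integral {0..T} (\<lambda>t. (norm (cov_d2 A u u1 u2 t))\<^sup>2)"
  have "0 < T" by (simp add: T_def)
  have "integral {0..T} (\<lambda>t. (norm (cov_d1 A u u1 t))\<^sup>2) \<le> integral {0..T} (\<lambda>t. ((1 + 1 / \<delta>) * V)\<^sup>2)"
  proof (rule integral_le)
    show "(\<lambda>t. (norm (cov_d1 A u u1 t))\<^sup>2) integrable_on {0..T}"
      by (intro integrable_continuous_interval continuous_intros continuous_on_cov_d1[OF W])
    show "(norm (cov_d1 A u u1 t))\<^sup>2 \<le> ((1 + 1 / \<delta>) * V)\<^sup>2" if "t \<in> {0..T}" for t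
      using norm_cov_d1_le_of_holonomy_gap[OF \<open>skew A\<close> F[unfolded M_def] gap[unfolded M_def] \<open>0 < \<delta>\<close> W,
          of t] that
      by (intro power_mono) (simp_all add: V_def T_def)
  qed (rule integrable_const_ivl)
  also have "\<dots> = T * (1 + 1 / \<delta>)\<^sup>2 * V\<^sup>2"
    using \<open>0 < T\<close> by (simp add: power_mult_distrib)
  also have "\<dots> \<le> T * (1 + 1 / \<delta>)\<^sup>2 * (T * X)"
    using square_integral_le[of "\<lambda>s. norm (cov_d2 A u u1 u2 s)" 0 T] square_integrable_cov_d2[OF W]
      absolutely_integrable_cov_d2[OF W, of 0 T] \<open>0 < T\<close>
    by (intro mult_left_mono) (simp_all add: V_def X_def T_def absolutely_integrable_on_def)
  also have "\<dots> = (T * (1 + 1 / \<delta>))\<^sup>2 * X"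
    by (simp add: power2_eq_square)
  finally show ?thesis
    by (simp add: T_def X_def)
qed

lemma has_integral_cos_squared: "((\<lambda>t. (cos t)\<^sup>2) has_integral pi) {0..2 * pi}"
proof -
  have "((\<lambda>t. (t + sin t * cos t) / 2) has_real_derivative (cos t)\<^sup>2) (at t)" for t
  proof -
    have "sin t * sin t + cos t * cos t = 1"
      using sin_cos_squared_add[of t] by (simp add: power2_eq_square)
    then have "2 - sin t * sin t * 2 = 2 * (cos t * cos t)" by linarith
    then show ?thesis
      by (auto intro!: derivative_eq_intros simp: power2_eq_square)
  qed
  then have "((\<lambda>t. (cos t)\<^sup>2) has_integral
      (2 * pi + sin (2 * pi) * cos (2 * pi)) / 2 - (0 + sin 0 * cos 0) / 2) {0..2 * pi}"
    by (intro fundamental_theorem_of_calculus)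
      (auto simp: has_real_derivative_iff_has_vector_derivative intro: has_vector_derivative_at_within)
  then show ?thesis by simp
qed

text \<open>Test function \<open>u = sin \<theta> e\<close>: its covariant derivative has squared \<open>L\<^sup>2\<close>-norm at least \<open>\<pi>\<close>.\<close>

lemma poincare_constant_nonneg:
  fixes A :: "real^'n::finite^'n"
  assumes "skew A"
    and C: "\<And>u u1 u2. W22 u u1 u2 \<Longrightarrow> integral {0..2 * pi} (\<lambda>t. (norm (cov_d1 A u u1 t))\<^sup>2)
              \<le> C * integral {0..2 * pi} (\<lambda>t. (norm (cov_d2 A u u1 u2 t))\<^sup>2)"
  shows "0 \<le> C"
proof (rule ccontr)
  assume "\<not> 0 \<le> C"
  obtain e :: "real^'n" where "norm e = 1"
    using norm_axis_1 by blast
  define u where "u t = sin t *\<^sub>R e" for t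
  define u1 where "u1 t = cos t *\<^sub>R e" for t
  define u2 where "u2 t = - (sin t *\<^sub>R e)" for t
  have W: "W22 u u1 u2"
    unfolding u_def u1_def u2_def
    by (rule W22_of_twice_differentiable) (auto intro!: derivative_eq_intros continuous_intros)
  have pi_le: "pi \<le> integral {0..2 * pi} (\<lambda>t. (norm (cov_d1 A u u1 t))\<^sup>2)"
  proof -
    have "(cos t)\<^sup>2 \<le> (norm (cov_d1 A u u1 t))\<^sup>2" for t
    proof -
      have "e \<bullet> e = 1" using \<open>norm e = 1\<close> by (simp add: norm_eq_1)
      moreover have "e \<bullet> (A *v e) = 0" "(A *v e) \<bullet> e = 0"
        using skew_inner_self[OF \<open>skew A\<close>, of e] by (simp_all add: inner_commute)
      ultimately have "(norm (cov_d1 A u u1 t))\<^sup>2 = (cos t)\<^sup>2 + (sin t)\<^sup>2 * (norm (A *v e))\<^sup>2"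
        unfolding power2_norm_eq_inner
        by (simp add: cov_d1_def u_def u1_def matrix_vector_mult_scaleR inner_add_left inner_add_right
            power2_eq_square)
      then show ?thesis by simp
    qed
    moreover have "(\<lambda>t. (norm (cov_d1 A u u1 t))\<^sup>2) integrable_on {0..2 * pi}"
      by (intro integrable_continuous_interval continuous_intros continuous_on_cov_d1[OF W])
    ultimately have "integral {0..2 * pi} (\<lambda>t. (cos t)\<^sup>2)
        \<le> integral {0..2 * pi} (\<lambda>t. (norm (cov_d1 A u u1 t))\<^sup>2)"
      by (intro integral_le has_integral_integrable[OF has_integral_cos_squared])
    then show ?thesis by (simp add: integral_unique[OF has_integral_cos_squared])
  qed
  have "0 \<le> integral {0..2 * pi} (\<lambda>t. (norm (cov_d2 A u u1 u2 t))\<^sup>2)"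
    by (rule integral_nonneg[OF square_integrable_cov_d2[OF W]]) simp
  then have "C * integral {0..2 * pi} (\<lambda>t. (norm (cov_d2 A u u1 u2 t))\<^sup>2) \<le> 0"
    using \<open>\<not> 0 \<le> C\<close> by (intro mult_nonpos_nonneg) simp_all
  with pi_le C[OF W] pi_gt_zero show False by linarith
qed

lemma poincare_const_le:
  fixes A :: "real^'n::finite^'n"
  assumes "skew A"
    and B: "\<And>u u1 u2. W22 u u1 u2 \<Longrightarrow> integral {0..2 * pi} (\<lambda>t. (norm (cov_d1 A u u1 t))\<^sup>2)
              \<le> B * integral {0..2 * pi} (\<lambda>t. (norm (cov_d2 A u u1 u2 t))\<^sup>2)"
  shows "poincare_const A \<le> B"
  unfolding poincare_const_def
  by (rule cInf_lower[OF _ bdd_belowI[of _ 0]])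
    (use B poincare_constant_nonneg[OF \<open>skew A\<close>] in blast)+

lemma poincare_const_le_of_holonomy_gap:
  fixes A :: "real^'n::finite^'n"
  defines "M \<equiv> matrix_flow A (2 * pi)"
  assumes "skew A"
    and "subspace F" "\<And>x. x \<in> F \<Longrightarrow> endo_apply M x = x"
    and "\<And>z. (\<And>x. x \<in> F \<Longrightarrow> z \<bullet> x = 0) \<Longrightarrow> \<delta> * norm z \<le> norm (endo_apply M z - z)"
    and "0 < \<delta>"
  shows "poincare_const A \<le> (2 * pi * (1 + 1 / \<delta>))\<^sup>2"
  using cov_d1_L2_le_of_holonomy_gap[OF assms(2-6)[unfolded M_def]]
  by (rule poincare_const_le[OF \<open>skew A\<close>])

section \<open>Non-degenerating sequences\<close>

lemma W22_matrix_flow_orbit: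
  assumes "endo_apply (matrix_flow A (2 * pi)) x = x"
  shows "W22 (\<lambda>t. endo_apply (matrix_flow A (- t)) x)
             (\<lambda>t. - (A *v endo_apply (matrix_flow A (- t)) x))
             (\<lambda>t. A *v (A *v endo_apply (matrix_flow A (- t)) x))"
proof (rule W22_of_twice_differentiable)
  fix t
  have "matrix_flow A (- (t + 2 * pi)) = matrix_flow A (- t) * matrix_flow A (- (2 * pi))"
    by (simp flip: matrix_flow_add)
  moreover have "endo_apply (matrix_flow A (- (2 * pi))) x = x"
    using assms matrix_flow_minus_mult[of A "2 * pi"] by (metis endo_apply_mult endo_apply_one)
  ultimately show "endo_apply (matrix_flow A (- (t + 2 * pi))) x = endo_apply (matrix_flow A (- t)) x"
    by simp
  show "((\<lambda>t. endo_apply (matrix_flow A (- t)) x) has_vector_derivative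
      - (A *v endo_apply (matrix_flow A (- t)) x)) (at t)"
    by (rule has_vector_derivative_matrix_flow_minus_apply)
  show "((\<lambda>t. - (A *v endo_apply (matrix_flow A (- t)) x)) has_vector_derivative
      A *v (A *v endo_apply (matrix_flow A (- t)) x)) (at t)"
    using has_vector_derivative_minus[OF bounded_linear.has_vector_derivative[OF
          matrix_vector_mul_bounded_linear has_vector_derivative_matrix_flow_minus_apply]]
    by (simp add: linear_neg[OF matrix_vector_mul_linear])
next
  show "continuous_on UNIV (\<lambda>t. A *v (A *v endo_apply (matrix_flow A (- t)) x))"
    by (intro bounded_linear.continuous_on[OF matrix_vector_mul_bounded_linear]
        continuous_on_vector_derivative) (rule has_vector_derivative_matrix_flow_minus_apply)
qed

text \<open>The kernel of \<open>\<partial>\<^sub>\<theta>\<^sub>,\<^sub>\<alpha>\<close> consists of the orbits \<open>e^{-\<theta> \<alpha>} x\<close> of vectors fixed by the holonomy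
  \<open>e^{2 \<pi> \<alpha>}\<close>, so non-degeneration makes \<open>\<alpha>\<^sub>n\<close> agree with \<open>\<alpha>\<close> along these orbits.\<close>

lemma non_degenerating_matrix_flow_eq:
  assumes "non_degenerating as \<alpha>"
  obtains N where "\<And>n x t. N \<le> n \<Longrightarrow> endo_apply (matrix_flow \<alpha> (2 * pi)) x = x \<Longrightarrow>
    endo_apply (matrix_flow (as n) t) x = endo_apply (matrix_flow \<alpha> t) x"
proof -
  obtain N where N: "\<And>u u1 u2 n t. W22 u u1 u2 \<Longrightarrow> (\<forall>t. cov_d1 \<alpha> u u1 t = 0) \<Longrightarrow> N \<le> n \<Longrightarrow>
      cov_d1 (as n) u u1 t = 0"
    using assms unfolding non_degenerating_def by blast
  show ?thesis
  proof (rule that[of N], rule matrix_flow_apply_eqI)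
    fix n x s assume "N \<le> n" and x: "endo_apply (matrix_flow \<alpha> (2 * pi)) x = x"
    from N[OF W22_matrix_flow_orbit[OF x] _ \<open>N \<le> n\<close>, of "- s"]
    show "as n *v endo_apply (matrix_flow \<alpha> s) x = \<alpha> *v endo_apply (matrix_flow \<alpha> s) x"
      by (simp add: cov_d1_def)
  qed
qed

theorem lemma4p5:
  fixes as :: "nat \<Rightarrow> real^'k^'k" and \<alpha> :: "real^'k^'k"
  assumes "\<And>n. skew (as n)" and "skew \<alpha>"
    and "as \<longlonglongrightarrow> \<alpha>"
    and "non_degenerating as \<alpha>"
  shows "\<exists>N B. \<forall>n\<ge>N. poincare_const (as n) \<le> B"
proof -
  define M where "M = matrix_flow \<alpha> (2 * pi)"
  define F where "F = {x. endo_apply M x = x}"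
  have "subspace F" by (simp add: F_def subspace_def)
  obtain N0 where agree: "\<And>n x t. N0 \<le> n \<Longrightarrow> endo_apply (matrix_flow \<alpha> (2 * pi)) x = x \<Longrightarrow>
      endo_apply (matrix_flow (as n) t) x = endo_apply (matrix_flow \<alpha> t) x"
    using non_degenerating_matrix_flow_eq[OF assms(4)] by metis
  obtain \<delta> where "\<delta> > 0"
    and gap: "\<And>z. (\<And>x. endo_apply M x = x \<Longrightarrow> z \<bullet> x = 0) \<Longrightarrow> \<delta> * norm z \<le> norm (endo_apply M z - z)"
    using linear_fixed_space_gap[OF bounded_linear.linear[OF bounded_linear_endo_apply[of M]]] by metis
  obtain N1 where gap_n: "\<And>n z. N1 \<le> n \<Longrightarrow> \<delta> * norm z \<le> norm (endo_apply M z - z) \<Longrightarrow>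
      \<delta> / 2 * norm z \<le> norm (endo_apply (matrix_flow (as n) (2 * pi)) z - z)"
    using eventually_matrix_flow_gap[OF assms(1-3) \<open>\<delta> > 0\<close>, of "2 * pi"]
    unfolding eventually_sequentially M_def by auto
  have "poincare_const (as n) \<le> (2 * pi * (1 + 1 / (\<delta> / 2)))\<^sup>2" if "max N0 N1 \<le> n" for n
    using that \<open>\<delta> > 0\<close> agree[of n _ "2 * pi"] gap gap_n[of n]
    by (intro poincare_const_le_of_holonomy_gap[OF assms(1) \<open>subspace F\<close>]) (auto simp: F_def M_def)
  then show ?thesis by blast
qed

end
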